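(* Let $r,s,t$ be nonzero reals and $\lambda=(\lambda_k)_{k\ge0}$ a strictly increasing sequence of positive reals with $\lambda_k\to\infty$. For $a=(a_n)\in\omega$ and $k<n$ let $$\widehat g_k(n)=\lambda_k\left(\frac{1}{\lambda_k-\lambda_{k-1}}\sum_{j=k}^n d_{jk}a_j-\frac{1}{\lambda_{k+1}-\lambda_k}\sum_{j=k+1}^n d_{j,k+1}a_j\right),$$ and for $1\le q<\infty$ let $f_3^\lambda=\{a\in\omega:\sup_{n}\sum_{k=0}^{n-1}|\widehat g_k(n)|^q<\infty\}$ and $f_4^\lambda=\{a\in\omega:\sup_{n}\left|\frac1r\frac{\lambda_n}{\lambda_n-\lambda_{n-1}}a_n\right|<\infty\}$. Then (i) $\{c_0^\lambda(\widehat B)\}^\gamma=\{c^\lambda(\widehat B)\}^\gamma=\{\ell_\infty^\lambda(\widehat B)\}^\gamma=f_3^\lambda\cap f_4^\lambda$ with $q=1$; (ii) if $1<p<\infty$ and $\frac1p+\frac1q=1$, then $\{\ell_p^\lambda(\widehat B)\}^\gamma=f_3^\lambda\cap f_4^\lambda$.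
   Context: $\omega$: all complex sequences indexed by $\mathbb{N}=\{0,1,\dots\}$. Convention: terms with negative subscript are $0$. $D=(d_{nk})$ is the inverse of the lower triangular matrix $B(r,s,t)$ having $r$ on the diagonal, $s$ on the first subdiagonal, $t$ on the second subdiagonal and zeros elsewhere; explicitly $d_{nk}=\frac1r\sum_{v=0}^{n-k}\rho_1^{\,n-k-v}\rho_2^{\,v}$ ($0\le k\le n$), $d_{nk}=0$ ($k>n$), $\rho_{1,2}=\frac{-s\pm\sqrt{s^2-4tr}}{2r}$. With $\widehat W_n(x)=\frac{1}{\lambda_n}\sum_{k=0}^n(\lambda_k-\lambda_{k-1})(rx_k+sx_{k-1}+tx_{k-2})$, for $\mu\in\{c_0,c,\ell_\infty,\ell_p\}$ set $\mu^\lambda(\widehat B)=\{x\in\omega:(\widehat W_n(x))_n\in\mu\}$. The $\gamma$-dual of a sequence space $X$ is $X^\gamma=\{a\in\omega:\sup_n|\sum_{k=0}^n a_kx_k|<\infty\text{ for all }x\in X\}$. *)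

theory Defs
  imports "HOL-Analysis.Analysis"
begin

text \<open>Convention: terms with negative subscript are 0.
  \<open>lam_prev lam k\<close> is \<open>\<lambda>_{k-1}\<close> (with \<open>\<lambda>_{-1} = 0\<close>);
  \<open>shft x j k\<close> is \<open>x_{k-j}\<close> (with \<open>x_m = 0\<close> for \<open>m < 0\<close>).\<close>

definition lam_prev :: "(nat \<Rightarrow> real) \<Rightarrow> nat \<Rightarrow> real" where
  "lam_prev lam k = (if k = 0 then 0 else lam (k - 1))"

definition shft :: "(nat \<Rightarrow> complex) \<Rightarrow> nat \<Rightarrow> nat \<Rightarrow> complex" where
  "shft x j k = (if j \<le> k then x (k - j) else 0)"

definition rho1 :: "real \<Rightarrow> real \<Rightarrow> real \<Rightarrow> complex" where
  "rho1 r s t = (- complex_of_real s + csqrt (complex_of_real (s^2 - 4*t*r))) / complex_of_real (2*r)"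

definition rho2 :: "real \<Rightarrow> real \<Rightarrow> real \<Rightarrow> complex" where
  "rho2 r s t = (- complex_of_real s - csqrt (complex_of_real (s^2 - 4*t*r))) / complex_of_real (2*r)"

text \<open>Entries of \<open>D = B(r,s,t)^{-1}\<close>.\<close>

definition dmat :: "real \<Rightarrow> real \<Rightarrow> real \<Rightarrow> nat \<Rightarrow> nat \<Rightarrow> complex" where
  "dmat r s t n k = (if k \<le> n then
     (1 / complex_of_real r) * (\<Sum>v = 0..n - k. rho1 r s t ^ (n - k - v) * rho2 r s t ^ v)
   else 0)"

definition What :: "real \<Rightarrow> real \<Rightarrow> real \<Rightarrow> (nat \<Rightarrow> real) \<Rightarrow> (nat \<Rightarrow> complex) \<Rightarrow> nat \<Rightarrow> complex" where
  "What r s t lam x n = complex_of_real (1 / lam n) *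
     (\<Sum>k\<le>n. complex_of_real (lam k - lam_prev lam k) *
        (complex_of_real r * x k + complex_of_real s * shft x 1 k + complex_of_real t * shft x 2 k))"

definition c0_seq :: "(nat \<Rightarrow> complex) set" where
  "c0_seq = {x. x \<longlonglongrightarrow> 0}"

definition c_seq :: "(nat \<Rightarrow> complex) set" where
  "c_seq = {x. convergent x}"

definition linf_seq :: "(nat \<Rightarrow> complex) set" where
  "linf_seq = {x. Bseq x}"

definition lp_seq :: "real \<Rightarrow> (nat \<Rightarrow> complex) set" where
  "lp_seq p = {x. summable (\<lambda>n. norm (x n) powr p)}"

definition lam_space :: "real \<Rightarrow> real \<Rightarrow> real \<Rightarrow> (nat \<Rightarrow> real) \<Rightarrow> (nat \<Rightarrow> complex) set \<Rightarrow> (nat \<Rightarrow> complex) set" where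
  "lam_space r s t lam \<mu> = {x. What r s t lam x \<in> \<mu>}"

definition gamma_dual :: "(nat \<Rightarrow> complex) set \<Rightarrow> (nat \<Rightarrow> complex) set" where
  "gamma_dual X = {a. \<forall>x\<in>X. Bseq (\<lambda>n. \<Sum>k\<le>n. a k * x k)}"

definition ghat :: "real \<Rightarrow> real \<Rightarrow> real \<Rightarrow> (nat \<Rightarrow> real) \<Rightarrow> (nat \<Rightarrow> complex) \<Rightarrow> nat \<Rightarrow> nat \<Rightarrow> complex" where
  "ghat r s t lam a k n = complex_of_real (lam k) *
     (complex_of_real (1 / (lam k - lam_prev lam k)) * (\<Sum>j = k..n. dmat r s t j k * a j)
      - complex_of_real (1 / (lam (k+1) - lam k)) * (\<Sum>j = k+1..n. dmat r s t j (k+1) * a j))"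

definition f3 :: "real \<Rightarrow> real \<Rightarrow> real \<Rightarrow> (nat \<Rightarrow> real) \<Rightarrow> real \<Rightarrow> (nat \<Rightarrow> complex) set" where
  "f3 r s t lam q = {a. bdd_above (range (\<lambda>n. \<Sum>k<n. norm (ghat r s t lam a k n) powr q))}"

definition f4 :: "real \<Rightarrow> (nat \<Rightarrow> real) \<Rightarrow> (nat \<Rightarrow> complex) set" where
  "f4 r lam = {a. Bseq (\<lambda>n. complex_of_real (1 / r * (lam n / (lam n - lam_prev lam n))) * a n)}"

end

theory Submission
  imports Defs
begin

text \<open>With \<open>y = What x\<close> one has \<open>x = D(\<Lambda>y)\<close>, where \<open>D = B(r,s,t)\<^sup>-\<^sup>1\<close> and \<open>\<Lambda> = unmean lam\<close> inverts the
  weighted mean defining \<open>What\<close>. Summation by parts then rewrites \<open>\<Sum>\<^sub>j\<^sub>\<le>\<^sub>n a\<^sub>j x\<^sub>j\<close> as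
  \<open>\<Sum>\<^sub>k\<^sub>\<le>\<^sub>n G\<^sub>n\<^sub>k y\<^sub>k\<close> for a lower triangular matrix \<open>G\<close> with entries \<open>\<hat>g\<^sub>k(n)\<close> below the
  diagonal and the terms of \<open>f\<^sub>4\<close> on it. Since \<open>y\<close> ranges over all of \<open>\<mu>\<close>, \<open>a\<close> lies in the
  \<open>\<gamma>\<close>-dual iff \<open>G\<close> maps \<open>\<mu>\<close> into \<open>\<ell>\<^sub>\<infinity>\<close>. For \<open>c\<^sub>0 \<subseteq> \<mu> \<subseteq> \<ell>\<^sub>\<infinity>\<close> this means
  \<open>sup\<^sub>n \<Sum>\<^sub>k |G\<^sub>n\<^sub>k| < \<infinity>\<close>, for \<open>\<ell>\<^sub>p\<close> it means \<open>sup\<^sub>n \<Sum>\<^sub>k |G\<^sub>n\<^sub>k|\<^sup>q < \<infinity>\<close>: sufficiency is the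
  triangle resp. Young's inequality, necessity a gliding-hump construction.\<close>

section \<open>The inverse of \<open>B(r,s,t)\<close>\<close>

definition inv_coeff :: "real \<Rightarrow> real \<Rightarrow> real \<Rightarrow> nat \<Rightarrow> complex" where
  "inv_coeff r s t l = (\<Sum>v = 0..l. rho1 r s t ^ (l - v) * rho2 r s t ^ v)"

lemma inv_coeff_0 [simp]: "inv_coeff r s t 0 = 1"
  by (simp add: inv_coeff_def)

lemma inv_coeff_Suc: "inv_coeff r s t (Suc l) = rho1 r s t * inv_coeff r s t l + rho2 r s t ^ Suc l"
proof -
  have "inv_coeff r s t (Suc l)
      = (\<Sum>v = 0..l. rho1 r s t ^ (Suc l - v) * rho2 r s t ^ v) + rho2 r s t ^ Suc l"
    unfolding inv_coeff_def by (simp add: sum.atLeast0_atMost_Suc)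
  also have "(\<Sum>v = 0..l. rho1 r s t ^ (Suc l - v) * rho2 r s t ^ v) = rho1 r s t * inv_coeff r s t l"
    unfolding inv_coeff_def sum_distrib_left by (rule sum.cong) (auto simp: Suc_diff_le mult.assoc)
  finally show ?thesis .
qed

lemma rho1_plus_rho2: "r \<noteq> 0 \<Longrightarrow> rho1 r s t + rho2 r s t = - of_real s / of_real r"
  unfolding rho1_def rho2_def by (simp add: field_simps)

lemma rho1_times_rho2:
  assumes "r \<noteq> 0"
  shows "rho1 r s t * rho2 r s t = of_real t / of_real r"
proof -
  let ?w = "csqrt (of_real (s\<^sup>2 - 4*t*r))"
  have "rho1 r s t * rho2 r s t = ((of_real s)\<^sup>2 - ?w\<^sup>2) / (of_real (2*r))\<^sup>2"
    unfolding rho1_def rho2_def by (simp add: field_simps power2_eq_square)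
  also have "?w\<^sup>2 = of_real (s\<^sup>2 - 4*t*r)"
    by simp
  finally show ?thesis
    using assms by (simp add: field_simps power2_eq_square)
qed

text \<open>\<open>\<rho>\<^sub>1, \<rho>\<^sub>2\<close> are the roots of \<open>r z\<^sup>2 + s z + t\<close>, so the complete homogeneous sums
  \<open>inv_coeff\<close> satisfy the recurrence of \<open>B(r,s,t)\<close>.\<close>

lemma inv_coeff_recurrence:
  assumes "r \<noteq> 0"
  shows "of_real r * inv_coeff r s t (Suc (Suc l)) + of_real s * inv_coeff r s t (Suc l)
           + of_real t * inv_coeff r s t l = 0"
proof -
  let ?a = "rho1 r s t" and ?b = "rho2 r s t"
  have rec: "inv_coeff r s t (Suc (Suc l))
      = (?a + ?b) * inv_coeff r s t (Suc l) - ?a * ?b * inv_coeff r s t l"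
    by (simp add: inv_coeff_Suc algebra_simps)
  show ?thesis
    unfolding rec rho1_plus_rho2[OF assms] rho1_times_rho2[OF assms]
    using assms by (simp add: field_simps)
qed

lemma inv_coeff_1:
  assumes "r \<noteq> 0"
  shows "of_real r * inv_coeff r s t (Suc 0) + of_real s = 0"
  using assms rho1_plus_rho2[OF assms, of s t] by (simp add: inv_coeff_Suc field_simps)

lemma dmat_eq_inv_coeff: "dmat r s t n k = (if k \<le> n then inv_coeff r s t (n - k) / of_real r else 0)"
  by (simp add: dmat_def inv_coeff_def)

lemma dmat_above_diagonal: "n < k \<Longrightarrow> dmat r s t n k = 0"
  by (simp add: dmat_def)

lemma B_times_dmat:
  assumes r: "r \<noteq> 0" and ij: "i \<le> j"
  shows "of_real r * dmat r s t j i
       + of_real s * (if 1 \<le> j then dmat r s t (j - 1) i else 0)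
       + of_real t * (if 2 \<le> j then dmat r s t (j - 2) i else 0)
       = (if i = j then 1 else 0)"
proof -
  consider "j = i" | "j = Suc i" | l where "j = Suc (Suc (i + l))"
    using ij by (metis add_Suc_right le_Suc_ex not0_implies_Suc nat.exhaust add_0_right)
  then show ?thesis
  proof cases
    case 1
    then show ?thesis using r by (auto simp: dmat_eq_inv_coeff)
  next
    case 2
    then show ?thesis using r inv_coeff_1[OF r, of s t] by (auto simp: dmat_eq_inv_coeff field_simps)
  next
    case 3
    have "Suc (Suc (i + l)) - i = Suc (Suc l)" "Suc (i + l) - i = Suc l" by simp_all
    with 3 show ?thesis
      using r inv_coeff_recurrence[OF r, of s t l] by (simp add: dmat_eq_inv_coeff field_simps)
  qed
qed

definition B_apply :: "real \<Rightarrow> real \<Rightarrow> real \<Rightarrow> (nat \<Rightarrow> complex) \<Rightarrow> nat \<Rightarrow> complex" where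
  "B_apply r s t x k = of_real r * x k + of_real s * shft x 1 k + of_real t * shft x 2 k"

definition D_apply :: "real \<Rightarrow> real \<Rightarrow> real \<Rightarrow> (nat \<Rightarrow> complex) \<Rightarrow> nat \<Rightarrow> complex" where
  "D_apply r s t z j = (\<Sum>i\<le>j. dmat r s t j i * z i)"

lemma sum_atMost_extend:
  assumes "m \<le> j" "\<And>i. m < i \<Longrightarrow> i \<le> j \<Longrightarrow> f i = 0"
  shows "(\<Sum>i\<le>(m::nat). f i) = (\<Sum>i\<le>j. f i)"
  using assms by (intro sum.mono_neutral_left) (auto simp: not_le)

lemma shft_D_apply:
  "shft (D_apply r s t z) m j = (\<Sum>i\<le>j. (if m \<le> j then dmat r s t (j - m) i else 0) * z i)"
proof (cases "m \<le> j")
  case True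
  have "shft (D_apply r s t z) m j = (\<Sum>i\<le>j - m. dmat r s t (j - m) i * z i)"
    using True by (simp add: shft_def D_apply_def)
  also have "\<dots> = (\<Sum>i\<le>j. dmat r s t (j - m) i * z i)"
    by (rule sum_atMost_extend) (auto simp: dmat_above_diagonal)
  finally show ?thesis using True by simp
qed (simp add: shft_def)

lemma B_D_apply:
  assumes r: "r \<noteq> 0"
  shows "B_apply r s t (D_apply r s t z) = z"
proof
  fix j
  have "B_apply r s t (D_apply r s t z) j = (\<Sum>i\<le>j. (of_real r * dmat r s t j i
       + of_real s * (if 1 \<le> j then dmat r s t (j - 1) i else 0)
       + of_real t * (if 2 \<le> j then dmat r s t (j - 2) i else 0)) * z i)"
    unfolding B_apply_def shft_D_apply D_apply_def
    by (simp add: sum_distrib_left sum.distrib algebra_simps)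
  also have "\<dots> = (\<Sum>i\<le>j. if i = j then z i else 0)"
    by (intro sum.cong refl) (subst B_times_dmat[OF r], auto)
  finally show "B_apply r s t (D_apply r s t z) j = z j" by simp
qed

lemma B_apply_inj:
  assumes r: "r \<noteq> 0" and eq: "B_apply r s t x = B_apply r s t w"
  shows "x = w"
proof
  fix j show "x j = w j"
  proof (induction j rule: less_induct)
    case (less j)
    then have "shft x 1 j = shft w 1 j" "shft x 2 j = shft w 2 j"
      by (auto simp: shft_def)
    with fun_cong[OF eq, of j] show ?case
      using r by (simp add: B_apply_def)
  qed
qed

lemma D_B_apply: "r \<noteq> 0 \<Longrightarrow> D_apply r s t (B_apply r s t x) = x"
  using B_apply_inj B_D_apply by blast

section \<open>The weighted mean and summation by parts\<close>

text \<open>\<open>unmean lam\<close> inverts the weighted mean \<open>z \<mapsto> ((1/\<lambda>\<^sub>n) \<Sum>\<^sub>k\<^sub>\<le>\<^sub>n (\<lambda>\<^sub>k - \<lambda>\<^sub>k\<^sub>-\<^sub>1) z\<^sub>k)\<^sub>n\<close>;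
  the junk value \<open>y (0 - 1)\<close> at \<open>k = 0\<close> is harmless because \<open>\<lambda>\<^sub>-\<^sub>1 = 0\<close>.\<close>

definition unmean :: "(nat \<Rightarrow> real) \<Rightarrow> (nat \<Rightarrow> complex) \<Rightarrow> nat \<Rightarrow> complex" where
  "unmean lam y k = of_real (1 / (lam k - lam_prev lam k)) *
     (of_real (lam k) * y k - of_real (lam_prev lam k) * y (k - 1))"

definition gamma_matrix ::
    "real \<Rightarrow> real \<Rightarrow> real \<Rightarrow> (nat \<Rightarrow> real) \<Rightarrow> (nat \<Rightarrow> complex) \<Rightarrow> nat \<Rightarrow> nat \<Rightarrow> complex" where
  "gamma_matrix r s t lam a n k =
     (if k < n then ghat r s t lam a k n
      else if k = n then of_real (1 / r * (lam n / (lam n - lam_prev lam n))) * a n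
      else 0)"

lemma gamma_matrix_lower: "n < k \<Longrightarrow> gamma_matrix r s t lam a n k = 0"
  by (simp add: gamma_matrix_def)

locale increasing_weights =
  fixes lam :: "nat \<Rightarrow> real"
  assumes strict_mono: "strict_mono lam" and pos: "\<And>k. lam k > 0"
begin

lemma lam_prev_Suc [simp]: "lam_prev lam (Suc k) = lam k"
  by (simp add: lam_prev_def)

lemma lam_prev_0 [simp]: "lam_prev lam 0 = 0"
  by (simp add: lam_prev_def)

lemma lam_diff_pos: "lam k - lam_prev lam k > 0"
  using pos[of k] strict_mono by (cases k) (simp_all add: strict_mono_def)

lemma lam_diff_times_unmean:
  "of_real (lam k - lam_prev lam k) * unmean lam y k
     = of_real (lam k) * y k - of_real (lam_prev lam k) * y (k - 1)"
  using lam_diff_pos[of k] by (simp add: unmean_def field_simps)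

lemma sum_lam_diff_unmean:
  "(\<Sum>k\<le>n. of_real (lam k - lam_prev lam k) * unmean lam y k) = of_real (lam n) * y n"
proof (induction n)
  case 0
  show ?case using lam_diff_times_unmean[of 0 y] by simp
next
  case (Suc n)
  show ?case using Suc lam_diff_times_unmean[of "Suc n" y] by (simp add: algebra_simps)
qed

lemma lam_times_What:
  "of_real (lam n) * What r s t lam x n
     = (\<Sum>k\<le>n. of_real (lam k - lam_prev lam k) * B_apply r s t x k)"
  using pos[of n] by (simp add: What_def B_apply_def)

lemma What_D_apply_unmean:
  assumes "r \<noteq> 0"
  shows "What r s t lam (D_apply r s t (unmean lam y)) = y"
proof
  fix n
  have "of_real (lam n) * What r s t lam (D_apply r s t (unmean lam y)) n = of_real (lam n) * y n"
    unfolding lam_times_What B_D_apply[OF assms] sum_lam_diff_unmean ..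
  then show "What r s t lam (D_apply r s t (unmean lam y)) n = y n"
    using pos[of n] by simp
qed

lemma unmean_What: "unmean lam (What r s t lam x) = B_apply r s t x"
proof
  fix k
  have "of_real (lam k - lam_prev lam k) * unmean lam (What r s t lam x) k
      = of_real (lam k - lam_prev lam k) * B_apply r s t x k"
    unfolding lam_diff_times_unmean
    by (cases k) (simp_all add: lam_times_What)
  then show "unmean lam (What r s t lam x) k = B_apply r s t x k"
    using lam_diff_pos[of k] by simp
qed

lemma sum_mult_unmean:
  "(\<Sum>i\<le>n. b i * unmean lam y i) =
     (\<Sum>k<n. of_real (lam k) * (of_real (1 / (lam k - lam_prev lam k)) * b k
        - of_real (1 / (lam (k+1) - lam k)) * b (k+1)) * y k)
     + of_real (lam n / (lam n - lam_prev lam n)) * b n * y n"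
proof (induction n)
  case 0
  then show ?case using pos[of 0] by (simp add: unmean_def)
next
  case (Suc n)
  have quot: "of_real (lam m / (lam m - lam_prev lam m))
      = of_real (lam m) * (of_real (1 / (lam m - lam_prev lam m)) :: complex)" for m
    by (simp add: divide_inverse)
  have step: "unmean lam y (Suc n) = of_real (1 / (lam (Suc n) - lam n)) *
     (of_real (lam (Suc n)) * y (Suc n) - of_real (lam n) * y n)"
    by (simp add: unmean_def)
  show ?case
    unfolding sum.atMost_Suc sum.lessThan_Suc Suc quot[of n] quot[of "Suc n"] step
    by (simp add: algebra_simps del: of_real_divide of_real_diff)
qed

text \<open>Substituting \<open>x = D(\<Lambda>y)\<close> with \<open>y = What x\<close> and summing by parts turns the partial
  sums of \<open>\<Sum> a\<^sub>k x\<^sub>k\<close> into the rows of \<open>gamma_matrix\<close> applied to \<open>y\<close>.\<close>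

lemma sum_mult_eq_gamma_matrix:
  assumes r: "r \<noteq> 0"
  shows "(\<Sum>j\<le>n. a j * x j) = (\<Sum>k\<le>n. gamma_matrix r s t lam a n k * What r s t lam x k)"
proof -
  define y where "y = What r s t lam x"
  define b where "b i = (\<Sum>j = i..n. dmat r s t j i * a j)" for i
  have x: "x = D_apply r s t (unmean lam y)"
    unfolding y_def unmean_What D_B_apply[OF r] ..
  have "(\<Sum>j\<le>n. a j * x j) = (\<Sum>j\<le>n. \<Sum>i\<le>n. a j * dmat r s t j i * unmean lam y i)"
  proof (rule sum.cong[OF refl])
    fix j assume "j \<in> {..n}"
    then have "(\<Sum>i\<le>j. a j * dmat r s t j i * unmean lam y i)
             = (\<Sum>i\<le>n. a j * dmat r s t j i * unmean lam y i)"
      by (intro sum_atMost_extend) (auto simp: dmat_above_diagonal)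
    then show "a j * x j = (\<Sum>i\<le>n. a j * dmat r s t j i * unmean lam y i)"
      unfolding x D_apply_def by (simp add: sum_distrib_left mult.assoc)
  qed
  also have "\<dots> = (\<Sum>i\<le>n. \<Sum>j\<le>n. a j * dmat r s t j i * unmean lam y i)"
    by (rule sum.swap)
  also have "\<dots> = (\<Sum>i\<le>n. b i * unmean lam y i)"
    unfolding b_def sum_distrib_right
    by (intro sum.cong refl sum.mono_neutral_cong_right) (auto simp: dmat_above_diagonal)
  also have "\<dots> = (\<Sum>k<n. gamma_matrix r s t lam a n k * y k) + gamma_matrix r s t lam a n n * y n"
    unfolding sum_mult_unmean
    by (simp add: gamma_matrix_def ghat_def b_def dmat_def)
  also have "\<dots> = (\<Sum>k\<le>n. gamma_matrix r s t lam a n k * y k)"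
    by (simp add: lessThan_Suc_atMost[symmetric])
  finally show ?thesis unfolding y_def .
qed

lemma gamma_dual_lam_space:
  assumes r: "r \<noteq> 0"
  shows "gamma_dual (lam_space r s t lam \<mu>)
       = {a. \<forall>y\<in>\<mu>. Bseq (\<lambda>n. \<Sum>k\<le>n. gamma_matrix r s t lam a n k * y k)}"
proof -
  have "surj (What r s t lam)"
    using What_D_apply_unmean[OF r] by (metis surj_def)
  then have forall_lam_space: "(\<forall>x\<in>lam_space r s t lam \<mu>. P (What r s t lam x)) \<longleftrightarrow> (\<forall>y\<in>\<mu>. P y)" for P
    unfolding lam_space_def by (metis (mono_tags, lifting) UNIV_I imageE mem_Collect_eq)
  have partial_sums: "(\<lambda>n. \<Sum>k\<le>n. a k * x k)
      = (\<lambda>n. \<Sum>k\<le>n. gamma_matrix r s t lam a n k * What r s t lam x k)" for a x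
    by (rule ext) (rule sum_mult_eq_gamma_matrix[OF r])
  show ?thesis
    unfolding gamma_dual_def partial_sums by (intro Collect_cong forall_lam_space)
qed

end

section \<open>Lower triangular matrices mapping \<open>\<mu>\<close> into \<open>\<ell>\<^sub>\<infinity>\<close>\<close>

definition row_powr_bounded :: "real \<Rightarrow> (nat \<Rightarrow> nat \<Rightarrow> complex) \<Rightarrow> bool" where
  "row_powr_bounded q A \<longleftrightarrow> bdd_above (range (\<lambda>n. \<Sum>k\<le>n. norm (A n k) powr q))"

lemma sum_atMost_split:
  assumes "(m::nat) \<le> n"
  shows "(\<Sum>k\<le>n. f k) = (\<Sum>k\<le>m. f k) + (\<Sum>k\<in>{m<..n}. f k)"
proof -
  have "{..n} = {..m} \<union> {m<..n}"
    using ivl_disj_un_one(3)[OF assms] ..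
  then show ?thesis
    by (simp only:) (rule sum.union_disjoint, auto)
qed

lemma norm_sum_mult_le:
  fixes A :: "nat \<Rightarrow> nat \<Rightarrow> complex"
  shows "norm (\<Sum>k\<le>m. A n k * y k) \<le> (\<Sum>k\<le>m. norm (A n k) * norm (y k))"
  by (rule order_trans[OF norm_sum]) (simp add: norm_mult)

lemma Bseq_row_sums_of_Bseq:
  assumes "row_powr_bounded 1 A" "Bseq y"
  shows "Bseq (\<lambda>n. \<Sum>k\<le>n. A n k * y k)"
proof -
  obtain M where M: "\<And>n. (\<Sum>k\<le>n. norm (A n k) powr 1) \<le> M"
    using assms(1) unfolding row_powr_bounded_def bdd_above_def by auto
  obtain K where K: "K > 0" "\<And>n. norm (y n) \<le> K"
    using assms(2) unfolding Bseq_def by auto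
  show ?thesis
  proof (rule BseqI')
    fix n
    have "norm (\<Sum>k\<le>n. A n k * y k) \<le> (\<Sum>k\<le>n. norm (A n k) * K)"
      by (rule order_trans[OF norm_sum_mult_le], rule sum_mono) (simp add: K(2) mult_left_mono)
    also have "\<dots> \<le> M * K"
      using M[of n] K(1) by (simp add: sum_distrib_right[symmetric] mult_right_mono)
    finally show "norm (\<Sum>k\<le>n. A n k * y k) \<le> M * K" .
  qed
qed

lemma conjugate_exponent_gt_1:
  fixes p q :: real
  assumes "1 < p" "1/p + 1/q = 1"
  shows "1 < q"
proof -
  have "1/q = 1 - 1/p" "0 < 1/p" "1/p < 1"
    using assms by auto
  then have "0 < 1/q" "1/q < 1"
    by linarith+
  then show ?thesis
    by (simp add: divide_less_eq)
qed

lemma Bseq_row_sums_of_lp: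
  assumes p: "1 < p" "1/p + 1/q = 1" and A: "row_powr_bounded q A"
    and y: "summable (\<lambda>n. norm (y n) powr p)"
  shows "Bseq (\<lambda>n. \<Sum>k\<le>n. A n k * y k)"
proof -
  have q: "1 < q" using conjugate_exponent_gt_1[OF p] .
  obtain M where M: "\<And>n. (\<Sum>k\<le>n. norm (A n k) powr q) \<le> M"
    using A unfolding row_powr_bounded_def bdd_above_def by auto
  define Y where "Y = (\<Sum>n. norm (y n) powr p)"
  have Y: "(\<Sum>k\<le>n. norm (y k) powr p) \<le> Y" for n
    unfolding Y_def by (rule sum_le_suminf[OF y]) auto
  show ?thesis
  proof (rule BseqI')
    fix n
    have "norm (\<Sum>k\<le>n. A n k * y k) \<le> (\<Sum>k\<le>n. norm (A n k) powr q / q + norm (y k) powr p / p)"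
      by (rule order_trans[OF norm_sum_mult_le], rule sum_mono)
        (use Youngs_inequality[of q p "norm (A n _)" "norm (y _)"] q p in auto)
    also have "\<dots> = (\<Sum>k\<le>n. norm (A n k) powr q) / q + (\<Sum>k\<le>n. norm (y k) powr p) / p"
      by (simp add: sum.distrib sum_divide_distrib)
    also have "\<dots> \<le> M / q + Y / p"
      using M[of n] Y[of n] p q by (intro add_mono divide_right_mono) auto
    finally show "norm (\<Sum>k\<le>n. A n k * y k) \<le> M / q + Y / p" .
  qed
qed

definition unit_seq :: "nat \<Rightarrow> nat \<Rightarrow> complex" where
  "unit_seq k j = (if j = k then 1 else 0)"

lemma columns_bounded:
  fixes A :: "nat \<Rightarrow> nat \<Rightarrow> complex"
  assumes lower: "\<And>n k. n < k \<Longrightarrow> A n k = 0"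
    and bounded: "\<forall>y\<in>X. Bseq (\<lambda>n. \<Sum>k\<le>n. A n k * y k)"
    and unit: "\<And>k. unit_seq k \<in> X"
  obtains C where "\<And>n k. norm (A n k) \<le> C k"
proof -
  have "(\<Sum>j\<le>n. A n j * unit_seq k j) = A n k" for n k
    using lower[of n k] by (cases "k \<le> n") (simp_all add: unit_seq_def if_distrib cong: if_cong)
  then have "\<forall>k. \<exists>C. \<forall>n. norm (A n k) \<le> C"
    using bounded unit unfolding Bseq_def by (metis less_eq_real_def)
  then show ?thesis
    using that by metis
qed

section \<open>The gliding hump\<close>

definition block_index :: "(nat \<Rightarrow> nat) \<Rightarrow> nat \<Rightarrow> nat" where
  "block_index N k = (LEAST i. k \<le> N (Suc i))"

lemma block_index_eq:
  assumes N: "strict_mono N" and k: "N i < k" "k \<le> N (Suc i)"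
  shows "block_index N k = i"
  unfolding block_index_def
proof (rule Least_equality)
  show "k \<le> N (Suc i)" by fact
next
  fix j assume "k \<le> N (Suc j)"
  then have "N i < N (Suc j)" using k by simp
  then show "i \<le> j" using N by (simp add: strict_mono_less)
qed

lemma block_index_bounds:
  assumes N: "strict_mono N" "N 0 = 0" and k: "0 < k"
  shows "N (block_index N k) < k" "k \<le> N (Suc (block_index N k))"
proof -
  show upper: "k \<le> N (Suc (block_index N k))"
    unfolding block_index_def by (rule LeastI[of _ k]) (use seq_suble[OF N(1), of "Suc k"] in simp)
  show "N (block_index N k) < k"
  proof (cases "block_index N k")
    case 0
    then show ?thesis using N k by simp
  next
    case (Suc j)
    then have "\<not> k \<le> N (Suc j)"
      unfolding block_index_def by (metis lessI not_less_Least)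
    then show ?thesis using Suc by simp
  qed
qed

lemma block_index_ge:
  assumes N: "strict_mono N" "N 0 = 0" and k: "N i < k"
  shows "i \<le> block_index N k"
proof -
  have "N i < N (Suc (block_index N k))"
    using block_index_bounds[OF N, of k] k by simp
  then show ?thesis using N(1) by (simp add: strict_mono_less)
qed

text \<open>The unimodular multiple of \<open>|w|\<^sup>q\<^sup>-\<^sup>1\<close> that realises equality in Hoelder's inequality.\<close>

definition holder_dual :: "real \<Rightarrow> complex \<Rightarrow> complex" where
  "holder_dual q w = (if w = 0 then 0 else cnj w / of_real (norm w) * of_real (norm w powr (q - 1)))"

lemma mult_holder_dual: "w * holder_dual q w = of_real (norm w powr q)"
proof (cases "w = 0")
  case False
  then have n: "norm w > 0" by simp
  have "w * holder_dual q w = (w * cnj w) / of_real (norm w) * of_real (norm w powr (q - 1))"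
    using False by (simp add: holder_dual_def)
  also have "w * cnj w = of_real (norm w) ^ 2"
    by (metis complex_norm_square of_real_power)
  finally show ?thesis
    using n by (simp add: power2_eq_square powr_diff)
qed (simp add: holder_dual_def)

lemma norm_holder_dual: "norm (holder_dual q w) = norm w powr (q - 1)"
  by (cases "w = 0") (simp_all add: holder_dual_def norm_mult norm_divide)

lemma unbounded_rows_choose_blocks:
  fixes A :: "nat \<Rightarrow> nat \<Rightarrow> complex" and T :: "nat \<Rightarrow> nat \<Rightarrow> real"
  assumes q: "0 \<le> q" and col: "\<And>n k. norm (A n k) \<le> C k"
    and unbounded: "\<not> row_powr_bounded q A"
  obtains N where "strict_mono N" "N 0 = 0"
    "\<And>i. T i (N i) \<le> (\<Sum>k\<in>{N i<..N (Suc i)}. norm (A (N (Suc i)) k) powr q)"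
proof -
  have far_row: "\<exists>n. m < n \<and> B \<le> (\<Sum>k\<in>{m<..n}. norm (A n k) powr q)" for m B
  proof -
    obtain n where n: "max 0 B + (\<Sum>k\<le>m. C k powr q) < (\<Sum>k\<le>n. norm (A n k) powr q)"
      using unbounded unfolding row_powr_bounded_def by (meson bdd_aboveI2 not_le)
    have head: "(\<Sum>k\<le>m. norm (A n k) powr q) \<le> (\<Sum>k\<le>m. C k powr q)"
      using q by (intro sum_mono powr_mono2) (auto simp: col)
    have "m < n"
    proof (rule ccontr)
      assume "\<not> m < n"
      then have "(\<Sum>k\<le>n. norm (A n k) powr q) \<le> (\<Sum>k\<le>m. norm (A n k) powr q)"
        by (intro sum_mono2) auto
      with n head show False by linarith
    qed
    moreover have "B \<le> (\<Sum>k\<in>{m<..n}. norm (A n k) powr q)"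
      using n head sum_atMost_split[of m n "\<lambda>k. norm (A n k) powr q"] \<open>m < n\<close> by auto
    ultimately show ?thesis by blast
  qed
  define next_end where
    "next_end i m = (SOME n. m < n \<and> T i m \<le> (\<Sum>k\<in>{m<..n}. norm (A n k) powr q))" for i m
  have next_end: "m < next_end i m" "T i m \<le> (\<Sum>k\<in>{m<..next_end i m}. norm (A (next_end i m) k) powr q)"
    for i m
    using someI_ex[OF far_row[of m "T i m"]] unfolding next_end_def by auto
  define N where "N = rec_nat 0 next_end"
  have N_0: "N 0 = 0" and N_Suc: "N (Suc i) = next_end i (N i)" for i
    by (simp_all add: N_def)
  show ?thesis
  proof (rule that[of N])
    show "strict_mono N"
      unfolding strict_mono_Suc_iff N_Suc using next_end(1) by simp
    show "T i (N i) \<le> (\<Sum>k\<in>{N i<..N (Suc i)}. norm (A (N (Suc i)) k) powr q)" for i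
      unfolding N_Suc by (rule next_end(2))
  qed (rule N_0)
qed

text \<open>Bounded columns keep the part of a row before a block bounded, so a large enough
  contribution from the block itself makes the row sums unbounded.\<close>

lemma gliding_hump_not_Bseq:
  fixes A :: "nat \<Rightarrow> nat \<Rightarrow> complex"
  assumes N: "strict_mono N" and col: "\<And>n k. norm (A n k) \<le> C k"
    and y: "\<And>k. norm (y k) \<le> 1"
    and hump: "\<And>i. real i + (\<Sum>k\<le>N i. C k) \<le> norm (\<Sum>k\<in>{N i<..N (Suc i)}. A (N (Suc i)) k * y k)"
  shows "\<not> Bseq (\<lambda>n. \<Sum>k\<le>n. A n k * y k)"
proof
  assume "Bseq (\<lambda>n. \<Sum>k\<le>n. A n k * y k)"
  then obtain K where K: "\<And>n. norm (\<Sum>k\<le>n. A n k * y k) \<le> K"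
    unfolding Bseq_def by auto
  obtain i where i: "K < real i"
    using reals_Archimedean2 by blast
  define n where "n = N (Suc i)"
  have head: "norm (\<Sum>k\<le>N i. A n k * y k) \<le> (\<Sum>k\<le>N i. C k)"
    by (rule order_trans[OF norm_sum_mult_le], rule sum_mono)
      (use mult_mono[OF col y order_trans[OF norm_ge_zero col] norm_ge_zero] in simp)
  have "(\<Sum>k\<le>n. A n k * y k) = (\<Sum>k\<le>N i. A n k * y k) + (\<Sum>k\<in>{N i<..n}. A n k * y k)"
    using N unfolding n_def by (intro sum_atMost_split) (simp add: strict_mono_less_eq)
  then have "norm (\<Sum>k\<in>{N i<..n}. A n k * y k) \<le> norm (\<Sum>k\<le>n. A n k * y k) + norm (\<Sum>k\<le>N i. A n k * y k)"
    by (metis add_diff_cancel_left' norm_triangle_ineq4)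
  with head hump[of i] K[of n] i show False
    unfolding n_def by linarith
qed

definition hump_seq :: "(nat \<Rightarrow> nat \<Rightarrow> complex) \<Rightarrow> real \<Rightarrow> (nat \<Rightarrow> nat) \<Rightarrow> (nat \<Rightarrow> real) \<Rightarrow> nat \<Rightarrow> complex"
  where
  "hump_seq A q N w k = (if k = 0 then 0 else
     of_real (w (block_index N k)) * holder_dual q (A (N (Suc (block_index N k))) k))"

lemma hump_seq_block:
  assumes "strict_mono N" "N i < k" "k \<le> N (Suc i)"
  shows "hump_seq A q N w k = of_real (w i) * holder_dual q (A (N (Suc i)) k)"
  using assms block_index_eq[OF assms] by (simp add: hump_seq_def)

lemma hump_seq_block_sum:
  assumes "strict_mono N"
  shows "(\<Sum>k\<in>{N i<..N (Suc i)}. A (N (Suc i)) k * hump_seq A q N w k)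
       = of_real (w i * (\<Sum>k\<in>{N i<..N (Suc i)}. norm (A (N (Suc i)) k) powr q))"
proof -
  have "(\<Sum>k\<in>{N i<..N (Suc i)}. A (N (Suc i)) k * hump_seq A q N w k)
      = (\<Sum>k\<in>{N i<..N (Suc i)}. of_real (w i) * of_real (norm (A (N (Suc i)) k) powr q))"
    by (intro sum.cong refl)
      (simp add: hump_seq_block[OF assms] mult_holder_dual[symmetric] algebra_simps)
  then show ?thesis
    by (simp add: sum_distrib_left)
qed

lemma row_powr_bounded_of_c0_multiplier:
  fixes A :: "nat \<Rightarrow> nat \<Rightarrow> complex"
  assumes lower: "\<And>n k. n < k \<Longrightarrow> A n k = 0"
    and bounded: "\<forall>y\<in>c0_seq. Bseq (\<lambda>n. \<Sum>k\<le>n. A n k * y k)"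
  shows "row_powr_bounded 1 A"
proof (rule ccontr)
  assume unbounded: "\<not> row_powr_bounded 1 A"
  have "unit_seq k \<in> c0_seq" for k
    unfolding c0_seq_def
    by (rule CollectI tendsto_eventually eventually_sequentiallyI[of "Suc k"])+ (simp add: unit_seq_def)
  then obtain C where col: "\<And>n k. norm (A n k) \<le> C k"
    using columns_bounded[OF lower bounded] by blast
  obtain N where N: "strict_mono N" "N 0 = 0" and blocks:
    "\<And>i. 2 ^ i * (real i + (\<Sum>k\<le>N i. C k)) \<le> (\<Sum>k\<in>{N i<..N (Suc i)}. norm (A (N (Suc i)) k) powr 1)"
    using unbounded_rows_choose_blocks[where q=1 and T="\<lambda>i m. 2 ^ i * (real i + (\<Sum>k\<le>m. C k))",
        OF _ col unbounded] by auto
  define y where "y = hump_seq A 1 N (\<lambda>i. (1/2) ^ i)"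
  have y_le: "norm (y k) \<le> (1/2) ^ block_index N k" for k
    by (simp add: y_def hump_seq_def norm_mult norm_holder_dual norm_power)
  have "y \<in> c0_seq"
    unfolding c0_seq_def
  proof (rule CollectI, rule LIMSEQ_I)
    fix e :: real assume "0 < e"
    then obtain i where i: "(1/2::real) ^ i < e"
      using real_arch_pow_inv[of e "1/2"] by auto
    have "norm (y k - 0) < e" if "Suc (N i) \<le> k" for k
    proof -
      have "i \<le> block_index N k"
        using that by (intro block_index_ge[OF N]) simp
      then have "(1/2::real) ^ block_index N k \<le> (1/2) ^ i"
        by (intro power_decreasing) auto
      with y_le[of k] i have "norm (y k) < e" by linarith
      then show ?thesis by simp
    qed
    then show "\<exists>k0. \<forall>k\<ge>k0. norm (y k - 0) < e" by blast
  qed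
  moreover have "\<not> Bseq (\<lambda>n. \<Sum>k\<le>n. A n k * y k)"
  proof (rule gliding_hump_not_Bseq[OF N(1) col])
    show "norm (y k) \<le> 1" for k
      using y_le[of k] by (simp add: power_le_one order_trans)
    show "real i + (\<Sum>k\<le>N i. C k) \<le> norm (\<Sum>k\<in>{N i<..N (Suc i)}. A (N (Suc i)) k * y k)" for i
    proof -
      have "real i + (\<Sum>k\<le>N i. C k) \<le> (1/2) ^ i * (\<Sum>k\<in>{N i<..N (Suc i)}. norm (A (N (Suc i)) k) powr 1)"
        using blocks[of i] by (simp add: field_simps)
      also have "\<dots> = norm (\<Sum>k\<in>{N i<..N (Suc i)}. A (N (Suc i)) k * y k)"
        unfolding y_def hump_seq_block_sum[OF N(1)] norm_of_real by (simp add: sum_nonneg)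
      finally show ?thesis .
    qed
  qed
  ultimately show False
    using bounded by blast
qed

lemma lp_seq_of_block_sums:
  assumes N: "strict_mono N" "N 0 = 0" and y0: "y 0 = 0" and p: "0 < p"
    and blocks: "\<And>i. (\<Sum>k\<in>{N i<..N (Suc i)}. norm (y k) powr p) \<le> (1/2) ^ i"
  shows "y \<in> lp_seq p"
proof -
  have partial: "(\<Sum>k\<le>N m. norm (y k) powr p) \<le> 2 - 2 * (1/2) ^ m" for m
  proof (induction m)
    case 0
    then show ?case using N(2) y0 p by simp
  next
    case (Suc m)
    have "N m \<le> N (Suc m)" using N(1) by (simp add: strict_mono_less_eq)
    then show ?case
      unfolding sum_atMost_split[OF \<open>N m \<le> N (Suc m)\<close>] using Suc blocks[of m] by simp
  qed
  have "summable (\<lambda>k. norm (y k) powr p)"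
  proof (rule bounded_imp_summable)
    fix n
    have "(\<Sum>k\<le>n. norm (y k) powr p) \<le> (\<Sum>k\<le>N n. norm (y k) powr p)"
      using seq_suble[OF N(1), of n] by (intro sum_mono2) auto
    also have "\<dots> \<le> 2"
      using partial[of n] zero_le_power[of "1/2::real" n] by linarith
    finally show "(\<Sum>k\<le>n. norm (y k) powr p) \<le> 2" .
  qed simp
  then show ?thesis by (simp add: lp_seq_def)
qed

text \<open>With block sums \<open>S\<^sub>i \<ge> (2\<^sup>i (i + M))\<^sup>q\<close> and weights \<open>w\<^sub>i = 2\<^sup>-\<^sup>i S\<^sub>i\<^sup>-\<^sup>1\<^sup>/\<^sup>p\<close>, block \<open>i\<close> of the
  hump sequence has \<open>\<ell>\<^sub>p\<close>-mass \<open>2\<^sup>-\<^sup>i\<^sup>p\<close> but contributes \<open>2\<^sup>-\<^sup>i S\<^sub>i\<^sup>1\<^sup>/\<^sup>q \<ge> i + M\<close> to its row.\<close>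

lemma row_powr_bounded_of_lp_multiplier:
  fixes A :: "nat \<Rightarrow> nat \<Rightarrow> complex" and p q :: real
  assumes p: "1 < p" "1/p + 1/q = 1"
    and lower: "\<And>n k. n < k \<Longrightarrow> A n k = 0"
    and bounded: "\<forall>y\<in>lp_seq p. Bseq (\<lambda>n. \<Sum>k\<le>n. A n k * y k)"
  shows "row_powr_bounded q A"
proof (rule ccontr)
  assume unbounded: "\<not> row_powr_bounded q A"
  have q: "1 < q" using conjugate_exponent_gt_1[OF p] .
  have conj: "1/q = 1 - 1/p" using p(2) by simp
  have "unit_seq k \<in> lp_seq p" for k
    unfolding lp_seq_def by (rule CollectI, rule summable_finite[of "{k}"]) (auto simp: unit_seq_def)
  then obtain C where col: "\<And>n k. norm (A n k) \<le> C k"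
    using columns_bounded[OF lower bounded] by blast
  define M where "M m = (\<Sum>k\<le>m. C k)" for m
  have M: "0 \<le> M m" for m
    unfolding M_def by (intro sum_nonneg order_trans[OF norm_ge_zero col])
  obtain N where N: "strict_mono N" "N 0 = 0" and blocks:
    "\<And>i. max 1 ((2 ^ i * (real i + M (N i))) powr q) \<le> (\<Sum>k\<in>{N i<..N (Suc i)}. norm (A (N (Suc i)) k) powr q)"
    using unbounded_rows_choose_blocks[where q=q and T="\<lambda>i m. max 1 ((2 ^ i * (real i + M m)) powr q)",
        OF _ col unbounded] q by auto
  define S where "S i = (\<Sum>k\<in>{N i<..N (Suc i)}. norm (A (N (Suc i)) k) powr q)" for i
  have S: "0 < S i" "(2 ^ i * (real i + M (N i))) powr q \<le> S i" for i
    using blocks[of i] unfolding S_def by linarith+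
  define w where "w i = (1/2) ^ i / S i powr (1/p)" for i
  define y where "y = hump_seq A q N w"
  have wp: "w i powr p * S i = ((1/2) ^ i) powr p" for i
    using S(1)[of i] p by (simp add: w_def powr_divide powr_powr)
  have y_block: "norm (y k) powr p = w i powr p * norm (A (N (Suc i)) k) powr q"
    if "N i < k" "k \<le> N (Suc i)" for i k
  proof -
    have "(q - 1) * p = q" using p q by (simp add: field_simps)
    moreover have "0 \<le> w i" by (simp add: w_def)
    moreover have "norm (y k) = w i * norm (A (N (Suc i)) k) powr (q - 1)"
      unfolding y_def hump_seq_block[OF N(1) that] by (simp add: norm_mult norm_divide norm_power norm_holder_dual w_def)
    ultimately show ?thesis
      by (simp add: powr_mult powr_powr)
  qed
  have block_mass: "(\<Sum>k\<in>{N i<..N (Suc i)}. norm (y k) powr p) = ((1/2) ^ i) powr p" for i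
  proof -
    have "(\<Sum>k\<in>{N i<..N (Suc i)}. norm (y k) powr p)
        = (\<Sum>k\<in>{N i<..N (Suc i)}. w i powr p * norm (A (N (Suc i)) k) powr q)"
      by (intro sum.cong refl) (auto simp: y_block)
    then show ?thesis
      by (simp add: S_def sum_distrib_left wp[symmetric])
  qed
  have half_powr: "((1/2::real) ^ i) powr p \<le> (1/2) ^ i" for i
    using p by (intro powr_le_one_le) (auto simp: power_le_one)
  have "y 0 = 0"
    by (simp add: y_def hump_seq_def)
  then have "y \<in> lp_seq p"
    using lp_seq_of_block_sums[OF N] p half_powr by (simp add: block_mass)
  moreover have "\<not> Bseq (\<lambda>n. \<Sum>k\<le>n. A n k * y k)"
  proof (rule gliding_hump_not_Bseq[OF N(1) col])
    show "norm (y k) \<le> 1" for k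
    proof (cases "k = 0")
      case False
      define i where "i = block_index N k"
      have k: "N i < k" "k \<le> N (Suc i)"
        using block_index_bounds[OF N, of k] False unfolding i_def by auto
      have "norm (y k) powr p \<le> w i powr p * S i"
        unfolding y_block[OF k] S_def
        by (intro mult_left_mono member_le_sum) (use k in auto)
      also have "\<dots> \<le> 1"
        unfolding wp using half_powr[of i] by (simp add: power_le_one order_trans)
      finally show ?thesis
        using p gr_one_powr[of "norm (y k)" p] by fastforce
    qed (simp add: y_def hump_seq_def)
    show "real i + (\<Sum>k\<le>N i. C k) \<le> norm (\<Sum>k\<in>{N i<..N (Suc i)}. A (N (Suc i)) k * y k)" for i
    proof -
      have "2 ^ i * (real i + M (N i)) = ((2 ^ i * (real i + M (N i))) powr q) powr (1/q)"
        using q M[of "N i"] by (simp add: powr_powr)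
      also have "\<dots> \<le> S i powr (1/q)"
        using S(2)[of i] q by (intro powr_mono2) auto
      finally have "real i + M (N i) \<le> (1/2) ^ i * S i powr (1/q)"
        by (simp add: field_simps)
      also have "S i powr (1/q) = S i / S i powr (1/p)"
        using S(1)[of i] unfolding conj powr_diff by simp
      also have "(1/2) ^ i * (S i / S i powr (1/p))
          = norm (\<Sum>k\<in>{N i<..N (Suc i)}. A (N (Suc i)) k * y k)"
        unfolding y_def hump_seq_block_sum[OF N(1)] norm_of_real S_def[symmetric] w_def
        using S(1)[of i] by simp
      finally show ?thesis by (simp add: M_def)
    qed
  qed
  ultimately show False
    using bounded by blast
qed

lemma multipliers_c0_linf_iff:
  fixes A :: "nat \<Rightarrow> nat \<Rightarrow> complex"
  assumes lower: "\<And>n k. n < k \<Longrightarrow> A n k = 0" and "c0_seq \<subseteq> \<mu>" "\<mu> \<subseteq> linf_seq"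
  shows "(\<forall>y\<in>\<mu>. Bseq (\<lambda>n. \<Sum>k\<le>n. A n k * y k)) \<longleftrightarrow> row_powr_bounded 1 A"
proof
  assume "\<forall>y\<in>\<mu>. Bseq (\<lambda>n. \<Sum>k\<le>n. A n k * y k)"
  then show "row_powr_bounded 1 A"
    using assms(2) by (intro row_powr_bounded_of_c0_multiplier[of A, OF lower]) auto
next
  assume "row_powr_bounded 1 A"
  then show "\<forall>y\<in>\<mu>. Bseq (\<lambda>n. \<Sum>k\<le>n. A n k * y k)"
    using assms(3) Bseq_row_sums_of_Bseq by (auto simp: linf_seq_def)
qed

lemma multipliers_lp_iff:
  fixes A :: "nat \<Rightarrow> nat \<Rightarrow> complex"
  assumes "1 < p" "1/p + 1/q = 1" and lower: "\<And>n k. n < k \<Longrightarrow> A n k = 0"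
  shows "(\<forall>y\<in>lp_seq p. Bseq (\<lambda>n. \<Sum>k\<le>n. A n k * y k)) \<longleftrightarrow> row_powr_bounded q A"
  using row_powr_bounded_of_lp_multiplier[of p q A, OF assms] Bseq_row_sums_of_lp[OF assms(1,2)]
  unfolding lp_seq_def by blast

lemma row_powr_bounded_gamma_matrix_iff:
  assumes q: "0 < q"
  shows "row_powr_bounded q (gamma_matrix r s t lam a) \<longleftrightarrow> a \<in> f3 r s t lam q \<inter> f4 r lam"
proof -
  define d where "d n = of_real (1 / r * (lam n / (lam n - lam_prev lam n))) * a n" for n
  define g where "g n = (\<Sum>k<n. norm (ghat r s t lam a k n) powr q)" for n
  have row: "(\<Sum>k\<le>n. norm (gamma_matrix r s t lam a n k) powr q) = g n + norm (d n) powr q" for n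
    by (simp add: lessThan_Suc_atMost[symmetric] gamma_matrix_def g_def d_def)
  have g: "0 \<le> g n" for n
    by (simp add: g_def sum_nonneg)
  have "bdd_above (range (\<lambda>n. g n + norm (d n) powr q)) \<longleftrightarrow> bdd_above (range g) \<and> Bseq d"
  proof
    assume "bdd_above (range (\<lambda>n. g n + norm (d n) powr q))"
    then obtain M where M: "\<And>n. g n + norm (d n) powr q \<le> M"
      unfolding bdd_above_def by auto
    have "norm (d n) \<le> M powr (1/q)" for n
    proof -
      have "norm (d n) = (norm (d n) powr q) powr (1/q)" using q by (simp add: powr_powr)
      also have "\<dots> \<le> M powr (1/q)" using M[of n] g[of n] q by (intro powr_mono2) auto
      finally show ?thesis .
    qed
    moreover have "g n \<le> M" for n
      using M[of n] powr_ge_zero[of "norm (d n)" q] by linarith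
    ultimately show "bdd_above (range g) \<and> Bseq d"
      by (auto intro!: bdd_aboveI2 BseqI')
  next
    assume "bdd_above (range g) \<and> Bseq d"
    then obtain M K where "\<And>n. g n \<le> M" "\<And>n. norm (d n) \<le> K"
      unfolding bdd_above_def Bseq_def by auto
    then have "g n + norm (d n) powr q \<le> M + K powr q" for n
      using q by (intro add_mono powr_mono2) auto
    then show "bdd_above (range (\<lambda>n. g n + norm (d n) powr q))"
      by (intro bdd_aboveI2)
  qed
  then show ?thesis
    unfolding row_powr_bounded_def row f3_def f4_def g_def d_def by simp
qed

context increasing_weights
begin

lemma gamma_dual_lam_space_between_c0_linf:
  assumes "r \<noteq> 0" "c0_seq \<subseteq> \<mu>" "\<mu> \<subseteq> linf_seq"
  shows "gamma_dual (lam_space r s t lam \<mu>) = f3 r s t lam 1 \<inter> f4 r lam"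
proof -
  have "(\<forall>y\<in>\<mu>. Bseq (\<lambda>n. \<Sum>k\<le>n. gamma_matrix r s t lam a n k * y k))
      \<longleftrightarrow> a \<in> f3 r s t lam 1 \<inter> f4 r lam" for a
    using multipliers_c0_linf_iff[of "gamma_matrix r s t lam a", OF gamma_matrix_lower assms(2,3)]
      row_powr_bounded_gamma_matrix_iff[of 1] by simp
  then show ?thesis
    unfolding gamma_dual_lam_space[OF assms(1)] by blast
qed

lemma gamma_dual_lam_space_lp:
  assumes "r \<noteq> 0" "1 < p" "1/p + 1/q = 1"
  shows "gamma_dual (lam_space r s t lam (lp_seq p)) = f3 r s t lam q \<inter> f4 r lam"
proof -
  have "(\<forall>y\<in>lp_seq p. Bseq (\<lambda>n. \<Sum>k\<le>n. gamma_matrix r s t lam a n k * y k))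
      \<longleftrightarrow> a \<in> f3 r s t lam q \<inter> f4 r lam" for a
    using multipliers_lp_iff[of p q "gamma_matrix r s t lam a", OF assms(2,3) gamma_matrix_lower]
      row_powr_bounded_gamma_matrix_iff[of q] conjugate_exponent_gt_1[OF assms(2,3)] by simp
  then show ?thesis
    unfolding gamma_dual_lam_space[OF assms(1)] by blast
qed

end

theorem theorem10:
  fixes r s t :: real and lam :: "nat \<Rightarrow> real"
  assumes "r \<noteq> 0" and "s \<noteq> 0" and "t \<noteq> 0"
    and "strict_mono lam" and "\<And>k. lam k > 0"
    and "filterlim lam at_top sequentially"
  shows "gamma_dual (lam_space r s t lam c0_seq) = f3 r s t lam 1 \<inter> f4 r lam
       \<and> gamma_dual (lam_space r s t lam c_seq) = f3 r s t lam 1 \<inter> f4 r lam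
       \<and> gamma_dual (lam_space r s t lam linf_seq) = f3 r s t lam 1 \<inter> f4 r lam
       \<and> (\<forall>p q. 1 < p \<and> 1/p + 1/q = 1 \<longrightarrow>
            gamma_dual (lam_space r s t lam (lp_seq p)) = f3 r s t lam q \<inter> f4 r lam)"
proof -
  interpret increasing_weights lam
    using assms(4,5) by unfold_locales
  have "c0_seq \<subseteq> c_seq" "c_seq \<subseteq> linf_seq"
    by (auto simp: c0_seq_def c_seq_def linf_seq_def convergent_imp_Bseq intro: convergentI)
  then show ?thesis
    using gamma_dual_lam_space_between_c0_linf[OF assms(1)] gamma_dual_lam_space_lp[OF assms(1)]
    by auto
qed

end
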